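(* For every constant $C_1 > 1$ there exists a constant $C_2 > 1$ such that the following holds. Let $\psi:\mathbb{R}\to\mathbb{R}$ satisfy $-\log(1 - x + \frac{x^2}{2}) \le \psi(x) \le \log(1 + x + \frac{x^2}{2})$ for all $x \in \mathbb{R}$. Let $\delta\in(0,1)$, suppose $n > C_2\log\frac{1}{\delta}$, and let $T = \sigma\sqrt{\frac{n}{2\log\frac{2}{\delta}}}$. Let $x_1,\dots,x_n$ be i.i.d. real samples with mean $\mu$ and variance at most $\sigma^2$, and let $\mu_0\in\mathbb{R}$ be a given initial estimate with $|\mu_0 - \mu| \le C_1\sigma\sqrt{\frac{\log\frac{1}{\delta}}{n}}$. Define \[ \widehat{\mu} = \mu_0 + \frac{T}{n}\sum_{i=1}^n \psi\!\left(\frac{x_i - \mu_0}{T}\right). \] Then with probability at least $1-\delta$, \[ |\widehat{\mu} - \mu| \le \left(1 + C_2\frac{\log\frac{1}{\delta}}{n}\right)\cdot\sigma\cdot\sqrt{\frac{2\log\frac{2}{\delta}}{n}}. \] *)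

theory Defs
  imports "HOL-Probability.Probability"
begin

end

theory Submission
  imports Defs
begin

(* Because exp \<psi>(x) \<le> 1 + x + x^2/2, Markov's inequality for the product
   of the i.i.d. factors 1 + (x_i - \<mu>0)/T + ((x_i - \<mu>0)/T)^2/2 shows that, outside an event
   of probability \<delta>/2, the sum of the \<psi>((x_i - \<mu>0)/T) is at most
   n (d/T + W/(2T^2)) + log(2/\<delta>), where d = \<mu> - \<mu>0 and W = E (x - \<mu>0)^2 = Var + d^2;
   the lower bound on \<psi> is the same upper bound for x \<mapsto> - \<psi> (- x), which at scale - T
   gives the mirror estimate. Hence |\<mu>hat - \<mu>| \<le> W/(2T) + T log(2/\<delta>)/n
   with probability 1 - \<delta>, and at the chosen T this is at most
   (1 + C1^2 log(1/\<delta>)/n) \<sigma> sqrt(2 log(2/\<delta>)/n) since d^2 \<le> C1^2 \<sigma>^2 log(1/\<delta>)/n.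
   So C2 = C1^2 works; the size condition on n is only needed to make n positive. *)

lemma PiM_prod_ge_measure_le:
  fixes f :: "'a \<Rightarrow> real"
  assumes P: "prob_space P" and I: "finite I" and f: "integrable P f"
    and f_nonneg: "\<And>x. x \<in> space P \<Longrightarrow> 0 \<le> f x" and c: "0 < c"
  shows "measure (PiM I (\<lambda>_. P)) {\<omega> \<in> space (PiM I (\<lambda>_. P)). c \<le> (\<Prod>i\<in>I. f (\<omega> i))}
      \<le> (\<integral>x. f x \<partial>P) ^ card I / c"
proof -
  interpret product_prob_space "\<lambda>_. P" I
    by (simp add: P product_prob_space_def product_prob_space_axioms_def
        product_sigma_finite_def prob_space_imp_sigma_finite)
  have "measure (PiM I (\<lambda>_. P)) {\<omega> \<in> space (PiM I (\<lambda>_. P)). c \<le> (\<Prod>i\<in>I. f (\<omega> i))}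
      \<le> (\<integral>\<omega>. (\<Prod>i\<in>I. f (\<omega> i)) \<partial>PiM I (\<lambda>_. P)) / c"
  proof (rule integral_Markov_inequality_measure[OF _ sets.top _ c])
    show "integrable (PiM I (\<lambda>_. P)) (\<lambda>\<omega>. \<Prod>i\<in>I. f (\<omega> i))"
      using f by (intro product_integrable_prod I)
    show "AE \<omega> in PiM I (\<lambda>_. P). 0 \<le> (\<Prod>i\<in>I. f (\<omega> i))"
      using f_nonneg by (intro AE_I2 prod_nonneg) (auto simp: space_PiM)
  qed
  also have "(\<integral>\<omega>. (\<Prod>i\<in>I. f (\<omega> i)) \<partial>PiM I (\<lambda>_. P)) = (\<integral>x. f x \<partial>P) ^ card I"
    using f by (subst product_integral_prod[OF I]) simp_all
  finally show ?thesis .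
qed

lemma chernoff_bound_sum_ln:
  fixes f :: "'a \<Rightarrow> real" and n :: nat
  assumes P: "prob_space P" and f: "integrable P f"
    and f_pos: "\<And>x. x \<in> space P \<Longrightarrow> 0 < f x" and \<delta>: "0 < \<delta>"
  defines "M \<equiv> PiM {..<n} (\<lambda>_. P)"
  shows "\<exists>B \<in> sets M. measure M B \<le> \<delta> \<and> (\<forall>\<omega> \<in> space M - B.
    (\<Sum>i<n. ln (f (\<omega> i))) \<le> real n * ln (\<integral>x. f x \<partial>P) + ln (1 / \<delta>))"
proof -
  interpret prob_space P by (rule P)
  have mean_pos: "0 < (\<integral>x. f x \<partial>P)"
    using integral_less_AE_space[of "\<lambda>_. 0" f] f f_pos by (simp add: emeasure_space_1)
  define c where "c = (\<integral>x. f x \<partial>P) ^ n / \<delta>"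
  have c: "0 < c" unfolding c_def using mean_pos \<delta> by simp
  define B where "B = {\<omega> \<in> space M. c \<le> (\<Prod>i<n. f (\<omega> i))}"
  have "B \<in> sets M"
    unfolding B_def M_def using borel_measurable_integrable[OF f] by measurable
  moreover have "measure M B \<le> \<delta>"
    using PiM_prod_ge_measure_le[OF P _ f _ c, of "{..<n}"] f_pos mean_pos \<delta>
    by (simp add: B_def M_def c_def less_imp_le)
  moreover have "(\<Sum>i<n. ln (f (\<omega> i))) \<le> real n * ln (\<integral>x. f x \<partial>P) + ln (1 / \<delta>)"
    if \<omega>: "\<omega> \<in> space M - B" for \<omega>
  proof -
    have pos: "0 < f (\<omega> i)" if "i < n" for i
      using \<omega> that f_pos by (auto simp: M_def space_PiM)
    have "(\<Sum>i<n. ln (f (\<omega> i))) = ln (\<Prod>i<n. f (\<omega> i))"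
      using pos by (subst ln_prod) (auto simp: less_imp_neq[symmetric])
    also have "\<dots> \<le> ln c"
      using \<omega> pos by (subst ln_le_cancel_iff) (auto simp: B_def c intro!: prod_pos)
    also have "ln c = real n * ln (\<integral>x. f x \<partial>P) + ln (1 / \<delta>)"
      using mean_pos \<delta> by (simp add: c_def ln_div ln_realpow)
    finally show ?thesis .
  qed
  ultimately show ?thesis by blast
qed

lemma integral_power2_diff_eq_variance_plus_bias:
  fixes P :: "real measure"
  assumes P: "prob_space P" and int1: "integrable P (\<lambda>x. x)" and int2: "integrable P (\<lambda>x. x^2)"
  shows "(\<integral>x. (x - m)^2 \<partial>P) = (\<integral>x. (x - (\<integral>y. y \<partial>P))^2 \<partial>P) + ((\<integral>y. y \<partial>P) - m)^2"
proof -
  interpret prob_space P by (rule P)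
  have expand: "(\<integral>x. (x - c)^2 \<partial>P) = (\<integral>x. x^2 \<partial>P) - 2 * c * (\<integral>y. y \<partial>P) + c^2" for c
    using int1 int2 by (simp add: power2_diff prob_space)
  show ?thesis
    unfolding expand by (simp add: power2_eq_square algebra_simps)
qed

lemma second_order_exp_pos: "0 < 1 + t + t^2 / (2::real)"
proof -
  have "0 < ((1 + t)^2 + 1) / 2" by (simp add: add_nonneg_pos)
  also have "\<dots> = 1 + t + t^2 / 2" by (simp add: power2_eq_square field_simps)
  finally show ?thesis .
qed

lemma integrable_second_order_exp:
  fixes P :: "real measure"
  assumes P: "prob_space P" and int1: "integrable P (\<lambda>x. x)" and int2: "integrable P (\<lambda>x. x^2)"
  shows "integrable P (\<lambda>x. 1 + a * (x - m) + (a * (x - m))^2 / 2)"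
proof -
  interpret prob_space P by (rule P)
  show ?thesis
    using int1 int2 by (simp add: power2_diff power_mult_distrib)
qed

lemma ln_integral_second_order_le:
  fixes P :: "real measure"
  assumes P: "prob_space P" and int1: "integrable P (\<lambda>x. x)" and int2: "integrable P (\<lambda>x. x^2)"
  shows "ln (\<integral>x. 1 + a * (x - m) + (a * (x - m))^2 / 2 \<partial>P)
    \<le> a * ((\<integral>y. y \<partial>P) - m) + a^2 / 2 * (\<integral>x. (x - m)^2 \<partial>P)"
proof -
  interpret prob_space P by (rule P)
  have int_sq: "integrable P (\<lambda>x. (x - m)^2)"
    using int1 int2 by (simp add: power2_diff)
  note int = integrable_second_order_exp[OF P int1 int2, of a m]
  have pos: "0 < (\<integral>x. 1 + a * (x - m) + (a * (x - m))^2 / 2 \<partial>P)"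
    using integral_less_AE_space[OF integrable_zero int] second_order_exp_pos
    by (simp add: emeasure_space_1)
  have "(\<integral>x. 1 + a * (x - m) + (a * (x - m))^2 / 2 \<partial>P)
      = 1 + a * ((\<integral>y. y \<partial>P) - m) + a^2 / 2 * (\<integral>x. (x - m)^2 \<partial>P)"
    using int1 int_sq by (simp add: power_mult_distrib prob_space)
  then show ?thesis
    using ln_le_minus_one[OF pos] by simp
qed

lemma rescaled_sum_le:
  fixes S d W l T n :: real
  assumes T: "0 < T" and n: "0 < n" and S: "S \<le> n * (d / T + W / (2 * T^2)) + l"
  shows "T / n * S \<le> d + W / (2 * T) + T * l / n"
proof -
  have "T / n * S \<le> T / n * (n * (d / T + W / (2 * T^2)) + l)"
    using S T n by (intro mult_left_mono) auto
  also have "\<dots> = d + W / (2 * T) + T * l / n"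
    using T n by (simp add: field_simps power2_eq_square)
  finally show ?thesis .
qed

lemma catoni_sum_upper_bound:
  fixes P :: "real measure" and \<phi> :: "real \<Rightarrow> real" and n :: nat
  assumes \<phi>: "\<And>x. \<phi> x \<le> ln (1 + x + x^2 / 2)"
    and P: "prob_space P" and int1: "integrable P (\<lambda>x. x)" and int2: "integrable P (\<lambda>x. x^2)"
    and \<delta>: "0 < \<delta>" and T: "T \<noteq> 0"
  defines "M \<equiv> PiM {..<n} (\<lambda>_. P)"
  shows "\<exists>B \<in> sets M. measure M B \<le> \<delta> \<and> (\<forall>\<omega> \<in> space M - B.
    (\<Sum>i<n. \<phi> ((\<omega> i - \<mu>0) / T))
      \<le> n * (((\<integral>y. y \<partial>P) - \<mu>0) / T + (\<integral>x. (x - \<mu>0)^2 \<partial>P) / (2 * T^2)) + ln (1 / \<delta>))"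
proof -
  let ?g = "\<lambda>x. 1 + 1 / T * (x - \<mu>0) + (1 / T * (x - \<mu>0))^2 / 2"
  obtain B where B: "B \<in> sets M" "measure M B \<le> \<delta>" and chernoff: "\<And>\<omega>. \<omega> \<in> space M - B \<Longrightarrow>
      (\<Sum>i<n. ln (?g (\<omega> i))) \<le> n * ln (\<integral>x. ?g x \<partial>P) + ln (1 / \<delta>)"
    using chernoff_bound_sum_ln[OF P integrable_second_order_exp[OF P int1 int2, of "1 / T" \<mu>0]
        second_order_exp_pos \<delta>, of n]
    unfolding M_def by blast
  have "(\<Sum>i<n. \<phi> ((\<omega> i - \<mu>0) / T))
      \<le> n * (((\<integral>y. y \<partial>P) - \<mu>0) / T + (\<integral>x. (x - \<mu>0)^2 \<partial>P) / (2 * T^2)) + ln (1 / \<delta>)"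
    if "\<omega> \<in> space M - B" for \<omega>
  proof -
    have "(\<Sum>i<n. \<phi> ((\<omega> i - \<mu>0) / T)) \<le> (\<Sum>i<n. ln (?g (\<omega> i)))"
      using \<phi> by (intro sum_mono) simp
    also have "\<dots> \<le> n * ln (\<integral>x. ?g x \<partial>P) + ln (1 / \<delta>)"
      using that by (rule chernoff)
    also have "\<dots> \<le> n * (1 / T * ((\<integral>y. y \<partial>P) - \<mu>0) + (1 / T)^2 / 2 * (\<integral>x. (x - \<mu>0)^2 \<partial>P))
        + ln (1 / \<delta>)"
      by (intro add_right_mono mult_left_mono ln_integral_second_order_le[OF P int1 int2]) simp
    finally show ?thesis
      by (simp add: power_divide mult.commute)
  qed
  then show ?thesis
    using B by blast
qed

lemma catoni_estimator_deviation:
  fixes P :: "real measure" and \<psi> :: "real \<Rightarrow> real" and n :: nat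
  assumes \<psi>_lower: "\<And>x. - ln (1 - x + x^2 / 2) \<le> \<psi> x"
    and \<psi>_upper: "\<And>x. \<psi> x \<le> ln (1 + x + x^2 / 2)"
    and P: "prob_space P" and int1: "integrable P (\<lambda>x. x)" and int2: "integrable P (\<lambda>x. x^2)"
    and \<delta>: "0 < \<delta>" and T: "0 < T" and n: "0 < n"
  defines "M \<equiv> PiM {..<n} (\<lambda>_. P)"
  shows "\<exists>E \<in> sets M. 1 - \<delta> \<le> measure M E \<and> (\<forall>\<omega> \<in> E.
    \<bar>\<mu>0 + T / n * (\<Sum>i<n. \<psi> ((\<omega> i - \<mu>0) / T)) - (\<integral>y. y \<partial>P)\<bar>
      \<le> (\<integral>x. (x - \<mu>0)^2 \<partial>P) / (2 * T) + T * ln (2 / \<delta>) / n)"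
proof -
  interpret M: prob_space M
    unfolding M_def using P by (intro prob_space_PiM) auto
  define d where "d = (\<integral>y. y \<partial>P) - \<mu>0"
  define W where "W = (\<integral>x. (x - \<mu>0)^2 \<partial>P)"
  define l where "l = ln (2 / \<delta>)"
  have \<delta>_half: "0 < \<delta> / 2" and ln_half: "ln (1 / (\<delta> / 2)) = l"
    using \<delta> by (simp_all add: l_def)
  obtain B1 where B1: "B1 \<in> sets M" "measure M B1 \<le> \<delta> / 2"
    and upper: "\<And>\<omega>. \<omega> \<in> space M - B1 \<Longrightarrow>
      (\<Sum>i<n. \<psi> ((\<omega> i - \<mu>0) / T)) \<le> n * (d / T + W / (2 * T^2)) + l"
    using catoni_sum_upper_bound[OF \<psi>_upper P int1 int2 \<delta>_half, of T n \<mu>0] T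
    unfolding M_def[symmetric] d_def[symmetric] W_def[symmetric] ln_half by auto
  have \<psi>_reflected: "- \<psi> (- x) \<le> ln (1 + x + x^2 / 2)" for x
    using \<psi>_lower[of "- x"] by (simp add: minus_le_iff)
  obtain B2 where B2: "B2 \<in> sets M" "measure M B2 \<le> \<delta> / 2"
    and lower: "\<And>\<omega>. \<omega> \<in> space M - B2 \<Longrightarrow>
      (\<Sum>i<n. - \<psi> ((\<omega> i - \<mu>0) / T)) \<le> n * (- d / T + W / (2 * T^2)) + l"
    using catoni_sum_upper_bound[of "\<lambda>x. - \<psi> (- x)", OF \<psi>_reflected P int1 int2 \<delta>_half, of "- T" n \<mu>0] T
    unfolding M_def[symmetric] d_def[symmetric] W_def[symmetric] ln_half
    by auto
  define E where "E = space M - (B1 \<union> B2)"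
  have "E \<in> sets M"
    using B1 B2 by (auto simp: E_def)
  moreover have "1 - \<delta> \<le> measure M E"
    using M.prob_compl[of "B1 \<union> B2"] measure_Un_le[of B1 M B2] B1 B2 by (auto simp: E_def)
  moreover have "\<bar>\<mu>0 + T / n * S - (\<mu>0 + d)\<bar> \<le> W / (2 * T) + T * l / n"
    if "\<omega> \<in> E" and S: "S = (\<Sum>i<n. \<psi> ((\<omega> i - \<mu>0) / T))" for \<omega> S
  proof -
    have "S \<le> n * (d / T + W / (2 * T^2)) + l"
      unfolding S using \<open>\<omega> \<in> E\<close> by (intro upper) (auto simp: E_def)
    then have up: "T / n * S \<le> d + W / (2 * T) + T * l / n"
      using T n by (intro rescaled_sum_le) auto
    have "- S \<le> n * (- d / T + W / (2 * T^2)) + l"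
      unfolding S sum_negf[symmetric] using \<open>\<omega> \<in> E\<close> by (intro lower) (auto simp: E_def)
    then have lo: "T / n * (- S) \<le> - d + W / (2 * T) + T * l / n"
      using T n by (intro rescaled_sum_le) auto
    show ?thesis
      using up lo by (simp add: abs_le_iff algebra_simps)
  qed
  ultimately show ?thesis
    unfolding d_def W_def l_def by auto
qed

lemma tuned_scale_bound:
  fixes \<sigma> l n W \<epsilon> :: real
  assumes \<sigma>: "0 < \<sigma>" and l: "0 < l" and n: "0 < n" and \<epsilon>: "0 \<le> \<epsilon>"
    and W: "W \<le> (1 + \<epsilon>) * \<sigma>^2"
  defines "T \<equiv> \<sigma> * sqrt (n / (2 * l))"
  shows "W / (2 * T) + T * l / n \<le> (1 + \<epsilon>) * \<sigma> * sqrt (2 * l / n)"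
proof -
  define s where "s = sqrt (2 * l / n)"
  have s: "0 < s" using l n by (simp add: s_def)
  have s2: "s^2 = 2 * l / n" using l n by (simp add: s_def)
  have T_eq: "T = \<sigma> / s"
    using l n by (simp add: T_def s_def real_sqrt_divide)
  have "W / (2 * T) = W * s / (2 * \<sigma>)"
    using \<sigma> s by (simp add: T_eq)
  also have "\<dots> \<le> (1 + \<epsilon>) * \<sigma>^2 * s / (2 * \<sigma>)"
    using W s \<sigma> by (intro divide_right_mono mult_right_mono) auto
  also have "\<dots> = (1 + \<epsilon>) * \<sigma> * s / 2"
    using \<sigma> by (simp add: power2_eq_square)
  finally have "W / (2 * T) \<le> (1 + \<epsilon>) * \<sigma> * s / 2" .
  moreover have "T * l / n = \<sigma> * s / 2"
    using s2 s n by (simp add: T_eq field_simps power2_eq_square)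
  moreover have "0 \<le> \<epsilon> * \<sigma> * s"
    using \<epsilon> \<sigma> s by simp
  ultimately show ?thesis
    unfolding s_def[symmetric] by (simp add: algebra_simps)
qed

lemma catoni_estimator_bound:
  fixes P :: "real measure" and \<psi> :: "real \<Rightarrow> real" and n :: nat
  assumes \<psi>_lower: "\<And>x. - ln (1 - x + x^2 / 2) \<le> \<psi> x"
    and \<psi>_upper: "\<And>x. \<psi> x \<le> ln (1 + x + x^2 / 2)"
    and \<delta>: "0 < \<delta>" "\<delta> < 1" and n: "0 < n" and \<sigma>: "0 \<le> \<sigma>"
    and P: "prob_space P" and int1: "integrable P (\<lambda>x. x)" and int2: "integrable P (\<lambda>x. x^2)"
    and var: "(\<integral>x. (x - (\<integral>y. y \<partial>P))^2 \<partial>P) \<le> \<sigma>^2"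
    and init: "\<bar>\<mu>0 - (\<integral>y. y \<partial>P)\<bar> \<le> C * \<sigma> * sqrt (ln (1 / \<delta>) / n)"
  defines "M \<equiv> PiM {..<n} (\<lambda>_. P)" and "T \<equiv> \<sigma> * sqrt (n / (2 * ln (2 / \<delta>)))"
  shows "\<exists>E \<in> sets M. E \<subseteq> {\<omega> \<in> space M.
      \<bar>\<mu>0 + T / n * (\<Sum>i<n. \<psi> ((\<omega> i - \<mu>0) / T)) - (\<integral>y. y \<partial>P)\<bar>
        \<le> (1 + C^2 * ln (1 / \<delta>) / n) * \<sigma> * sqrt (2 * ln (2 / \<delta>) / n)}
    \<and> measure M E \<ge> 1 - \<delta>"
proof (cases "\<sigma> = 0")
  case True
  interpret M: prob_space M
    unfolding M_def using P by (intro prob_space_PiM) auto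
  have "\<mu>0 = (\<integral>y. y \<partial>P)" and "T = 0"
    using init True by (simp_all add: T_def)
  then show ?thesis
    using \<delta> by (intro bexI[of _ "space M"]) (auto simp: True M.prob_space)
next
  case False
  define L where "L = ln (1 / \<delta>)"
  have L: "0 < L" using \<delta> by (simp add: L_def)
  have \<sigma>_pos: "0 < \<sigma>" and T: "0 < T"
    using \<sigma> False \<delta> n by (auto simp: T_def)
  obtain E where E: "E \<in> sets M" "1 - \<delta> \<le> measure M E" and dev: "\<And>\<omega>. \<omega> \<in> E \<Longrightarrow>
      \<bar>\<mu>0 + T / n * (\<Sum>i<n. \<psi> ((\<omega> i - \<mu>0) / T)) - (\<integral>y. y \<partial>P)\<bar>
        \<le> (\<integral>x. (x - \<mu>0)^2 \<partial>P) / (2 * T) + T * ln (2 / \<delta>) / n"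
    using catoni_estimator_deviation[OF \<psi>_lower \<psi>_upper P int1 int2 \<delta>(1) T n, of \<mu>0]
    unfolding M_def by blast
  have "((\<integral>y. y \<partial>P) - \<mu>0)^2 \<le> (C * \<sigma> * sqrt (L / n))^2"
    using init by (simp add: L_def abs_minus_commute flip: abs_le_square_iff)
  also have "\<dots> = C^2 * L / n * \<sigma>^2"
    using L n by (simp add: power_mult_distrib)
  finally have "(\<integral>x. (x - \<mu>0)^2 \<partial>P) \<le> (1 + C^2 * L / n) * \<sigma>^2"
    using var integral_power2_diff_eq_variance_plus_bias[OF P int1 int2, of \<mu>0]
    by (simp add: algebra_simps)
  then have "(\<integral>x. (x - \<mu>0)^2 \<partial>P) / (2 * T) + T * ln (2 / \<delta>) / n
      \<le> (1 + C^2 * L / n) * \<sigma> * sqrt (2 * ln (2 / \<delta>) / n)"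
    unfolding T_def using \<sigma>_pos \<delta> n L by (intro tuned_scale_bound) auto
  then show ?thesis
    using E dev sets.sets_into_space[OF E(1)] unfolding L_def by (intro bexI[of _ E]) force+
qed

theorem lemma11:
  shows "\<forall>C1::real. C1 > 1 \<longrightarrow> (\<exists>C2::real. C2 > 1 \<and>
    (\<forall>(\<psi>::real \<Rightarrow> real) (\<delta>::real) (n::nat) (\<sigma>::real) (P::real measure) (\<mu>0::real).
      (\<forall>x. - ln (1 - x + x^2 / 2) \<le> \<psi> x \<and> \<psi> x \<le> ln (1 + x + x^2 / 2))
      \<and> 0 < \<delta> \<and> \<delta> < 1
      \<and> real n > C2 * ln (1 / \<delta>)
      \<and> 0 \<le> \<sigma>
      \<and> prob_space P \<and> sets P = sets borel
      \<and> integrable P (\<lambda>x. x) \<and> integrable P (\<lambda>x. x^2)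
      \<and> (\<integral>x. (x - (\<integral>y. y \<partial>P))^2 \<partial>P) \<le> \<sigma>^2
      \<and> \<bar>\<mu>0 - (\<integral>y. y \<partial>P)\<bar> \<le> C1 * \<sigma> * sqrt (ln (1 / \<delta>) / real n)
      \<longrightarrow>
      (let \<mu> = (\<integral>y. y \<partial>P);
           T = \<sigma> * sqrt (real n / (2 * ln (2 / \<delta>)));
           M = PiM {..<n} (\<lambda>_. P);
           \<mu>hat = (\<lambda>\<omega>. \<mu>0 + T / real n * (\<Sum>i<n. \<psi> ((\<omega> i - \<mu>0) / T)))
       in \<exists>E \<in> sets M.
            E \<subseteq> {\<omega> \<in> space M. \<bar>\<mu>hat \<omega> - \<mu>\<bar>
                 \<le> (1 + C2 * ln (1 / \<delta>) / real n) * \<sigma> * sqrt (2 * ln (2 / \<delta>) / real n)}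
            \<and> measure M E \<ge> 1 - \<delta>)))"
  apply (intro allI impI)
  subgoal premises C1 for C1
    apply (rule exI[of _ "C1^2"], intro conjI allI impI)
    subgoal using C1 by simp
    apply (elim conjE)
    subgoal premises H for \<psi> \<delta> n \<sigma> P \<mu>0
    proof -
      have "0 < C1^2 * ln (1 / \<delta>)"
        using C1 H(2,3) by simp
      then have "0 < n"
        using H(4) by simp
      then show ?thesis
        unfolding Let_def using H by (intro catoni_estimator_bound) auto
    qed
    done
  done

end
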